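(* Let $\Omega\subset\mathbb{R}^3$ be a bounded domain, assume Property A (see context) with constant $\rho\in[0,1)$, and let $0\le\alpha<(1-\rho)/2$. Then for every $h\in L^\infty_\alpha$, $$|S_\Omega Kh(x,v)|\lesssim|h|_{\infty,\alpha}e^{-\alpha|v|^2}\min\Big\{1,\frac{\operatorname{diam}(\Omega)}{|v|}\Big\}$$ for a.e. $(x,v)\in\Omega\times\mathbb{R}^3$.
   Context: Property A: there are $\nu$ and $k$, with $Kf(x,v)=\int_{\mathbb{R}^3}k(v,v_* )f(x,v_* )dv_*$, and $\gamma\in[0,1]$, $\rho\in[0,1)$, such that $(1+|v|)^\gamma\lesssim\nu(v)\lesssim(1+|v|)^\gamma$, $|\nabla\nu|\lesssim(1+|v|)^{\gamma-1}$, $|k(v,v_* )|\lesssim\frac{E(v,v_* )}{|v-v_*|(1+|v|+|v_*|)^{1-\gamma}}$ and $|\nabla_vk(v,v_* )|\lesssim\frac{(1+|v|)E(v,v_* )}{|v-v_*|^2(1+|v|+|v_*|)^{1-\gamma}}$, where $E=\exp(-\frac{1-\rho}{4}(|v-v_*|^2+(\frac{|v|^2-|v_*|^2}{|v-v_*|})^2))$. $\tau_{x,v}=\inf\{s\ge0:x-sv\in\Omega^c\}$; $S_\Omega h(x,v)=\int_0^{\tau_{x,v}}e^{-\nu(v)s}h(x-sv,v)ds$. $|f|_{\infty,\alpha}=\operatorname{ess\,sup}_{\Omega\times\mathbb{R}^3}e^{\alpha|v|^2}|f|$, $L^\infty_\alpha=\{f:|f|_{\infty,\alpha}<\infty\}$.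 $a\lesssim b$: $a\le Cb$ for a constant $C\ge0$ independent of $\Omega,h,x,v$. *)

theory Defs
  imports "HOL-Analysis.Analysis" "HOL-Probability.Essential_Supremum"
begin

definition E_fac :: "real \<Rightarrow> real^3 \<Rightarrow> real^3 \<Rightarrow> real" where
  "E_fac \<rho> v w = exp (- ((1 - \<rho>) / 4) *
      ((norm (v - w))\<^sup>2 + (((norm v)\<^sup>2 - (norm w)\<^sup>2) / norm (v - w))\<^sup>2))"

text \<open>Property A, with parameters gamma, rho and one implicit constant C
  (covering all the lesssim relations). Kernel bounds are required off the diagonal.\<close>
definition propA :: "(real^3 \<Rightarrow> real) \<Rightarrow> (real^3 \<Rightarrow> real^3 \<Rightarrow> real) \<Rightarrow> real \<Rightarrow> real \<Rightarrow> real \<Rightarrow> bool" where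
  "propA \<nu> k \<gamma> \<rho> C \<longleftrightarrow>
     0 \<le> \<gamma> \<and> \<gamma> \<le> 1 \<and> 0 \<le> \<rho> \<and> \<rho> < 1 \<and> 0 < C \<and>
     (\<lambda>(v, w). k v w) \<in> borel_measurable borel \<and>
     (\<forall>v. (1 + norm v) powr \<gamma> \<le> C * \<nu> v \<and> \<nu> v \<le> C * (1 + norm v) powr \<gamma>) \<and>
     (\<forall>v. \<exists>g::real^3. (\<nu> has_derivative (\<lambda>u. g \<bullet> u)) (at v) \<and>
            norm g \<le> C * (1 + norm v) powr (\<gamma> - 1)) \<and>
     (\<forall>v w. v \<noteq> w \<longrightarrow>
        \<bar>k v w\<bar> \<le> C * E_fac \<rho> v w / (norm (v - w) * (1 + norm v + norm w) powr (1 - \<gamma>))) \<and>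
     (\<forall>v w. v \<noteq> w \<longrightarrow> (\<exists>g::real^3. ((\<lambda>u. k u w) has_derivative (\<lambda>u. g \<bullet> u)) (at v) \<and>
        norm g \<le> C * (1 + norm v) * E_fac \<rho> v w /
                   ((norm (v - w))\<^sup>2 * (1 + norm v + norm w) powr (1 - \<gamma>))))"

definition Kop :: "(real^3 \<Rightarrow> real^3 \<Rightarrow> real) \<Rightarrow> (real^3 \<Rightarrow> real^3 \<Rightarrow> real) \<Rightarrow> real^3 \<Rightarrow> real^3 \<Rightarrow> real" where
  "Kop k f x v = (LINT w|lborel. k v w * f x w)"

text \<open>Backward exit time; infimum of the empty set is +infinity.\<close>
definition tau :: "(real^3) set \<Rightarrow> real^3 \<Rightarrow> real^3 \<Rightarrow> ereal" where
  "tau \<Omega> x v = Inf {ereal s | s. 0 \<le> s \<and> x - s *\<^sub>R v \<notin> \<Omega>}"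

definition S_Omega :: "(real^3) set \<Rightarrow> (real^3 \<Rightarrow> real) \<Rightarrow> (real^3 \<Rightarrow> real^3 \<Rightarrow> real) \<Rightarrow> real^3 \<Rightarrow> real^3 \<Rightarrow> real" where
  "S_Omega \<Omega> \<nu> g x v =
     (LINT s : {s. 0 \<le> s \<and> ereal s < tau \<Omega> x v} | lborel. exp (- \<nu> v * s) * g (x - s *\<^sub>R v) v)"

definition Linf_norm :: "(real^3) set \<Rightarrow> real \<Rightarrow> (real^3 \<Rightarrow> real^3 \<Rightarrow> real) \<Rightarrow> ereal" where
  "Linf_norm \<Omega> \<alpha> h = esssup (lebesgue_on (\<Omega> \<times> UNIV))
      (\<lambda>(x, v). ereal (exp (\<alpha> * (norm v)\<^sup>2) * \<bar>h x v\<bar>))"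

definition Linf_alpha :: "(real^3) set \<Rightarrow> real \<Rightarrow> (real^3 \<Rightarrow> real^3 \<Rightarrow> real) set" where
  "Linf_alpha \<Omega> \<alpha> = {h. (\<lambda>(x, v). h x v) \<in> borel_measurable (lebesgue_on (\<Omega> \<times> UNIV))
                          \<and> Linf_norm \<Omega> \<alpha> h < \<infinity>}"

definition bdd_domain :: "(real^3) set \<Rightarrow> bool" where
  "bdd_domain \<Omega> \<longleftrightarrow> open \<Omega> \<and> connected \<Omega> \<and> \<Omega> \<noteq> {} \<and> bounded \<Omega>"

end

theory Submission
  imports Defs
begin

(*
  Completing the square in the exponent of E(v,w) gives
    |k(v,w)| e^(-alpha |w|^2) <= C e^(-alpha |v|^2) e^(-b |v-w|^2) / |v-w|,
  with b = (1-rho)/4 - alpha^2/(1-rho), which is positive exactly when |alpha| < (1-rho)/2.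
  In dimension n >= 2 the right-hand side is integrable in w: 1/|u| is at most the product
  of the |u_i|^(-1/n), so the integral factorises into one-dimensional integrals of
  |t|^(-1/n) e^(-b t^2).  Hence |Kh(y,v)| <~ |h| e^(-alpha |v|^2) for all y outside a null set.
  By Fubini, almost every backward characteristic s |-> x - s v meets that null set only
  in a null set of times, and along it the weight e^(-nu s) integrates to at most 1/nu <~ 1,
  while the characteristic leaves Omega after time at most diam(Omega)/|v|.
*)

section \<open>An integrable singular Gaussian kernel\<close>

definition gauss_div_norm :: "real \<Rightarrow> 'a::real_normed_vector \<Rightarrow> real" where
  "gauss_div_norm b u = exp (- b * (norm u)\<^sup>2) / norm u"

lemma gauss_div_norm_nonneg: "0 \<le> gauss_div_norm b u"
  by (simp add: gauss_div_norm_def)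

lemma abs_powr_mult_gaussian_le:
  fixes t p b :: real
  assumes "0 \<le> p" and "0 \<le> b"
  shows "\<bar>t\<bar> powr (- p) * exp (- b * t\<^sup>2)
    \<le> (if \<bar>t\<bar> \<le> 1 then \<bar>t\<bar> powr (- p) else exp (- b * \<bar>t\<bar>))"
proof (cases "\<bar>t\<bar> \<le> 1")
  case True
  then show ?thesis
    using assms by (simp add: mult_left_le)
next
  case False
  have "\<bar>t\<bar> * 1 \<le> \<bar>t\<bar> * \<bar>t\<bar>"
    using False by (intro mult_left_mono) auto
  then have "exp (- b * t\<^sup>2) \<le> exp (- b * \<bar>t\<bar>)"
    using assms(2) by (simp add: power2_eq_square mult_left_mono)
  moreover have "\<bar>t\<bar> powr (- p) \<le> 1"
    using False assms(1) by (simp add: powr_minus inverse_le_1_iff ge_one_powr_ge_zero)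
  ultimately show ?thesis
    using False by (simp add: mult_le_one mult_mono' order_trans[OF mult_right_mono])
qed

lemma nn_integral_abs_powr_gaussian_finite:
  fixes p b :: real
  assumes p: "0 \<le> p" "p < 1" and b: "0 < b"
  shows "(\<integral>\<^sup>+ t. ennreal (\<bar>t\<bar> powr (- p) * exp (- b * t\<^sup>2)) \<partial>lborel) < \<infinity>"
proof -
  define g where "g t = (if t \<in> {0..1} then t powr (- p) else 0) + (if t \<in> {0..} then exp (- b * t) else 0)"
    for t :: real
  have g_nonneg: "0 \<le> g t" for t
    by (simp add: g_def)
  have g_measurable [measurable]: "g \<in> borel_measurable borel"
    unfolding g_def by measurable
  have "((\<lambda>t. if t \<in> {0..1} then t powr (- p) else 0) has_integral 1 / (1 - p)) UNIV"
    unfolding has_integral_restrict_UNIV using has_integral_powr_from_0[of "- p" 1] p by simp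
  moreover have "((\<lambda>t. if t \<in> {0..} then exp (- b * t) else 0) has_integral 1 / b) UNIV"
    unfolding has_integral_restrict_UNIV using has_integral_exp_minus_to_infinity[OF b, of 0] by simp
  ultimately have "(g has_integral 1 / (1 - p) + 1 / b) UNIV"
    unfolding g_def[abs_def] by (rule has_integral_add)
  then have int_g: "(\<integral>\<^sup>+ t. ennreal (g t) \<partial>lborel) = ennreal (1 / (1 - p) + 1 / b)"
    by (rule nn_integral_has_integral_lborel[OF g_measurable g_nonneg])
  have int_g_reflect: "(\<integral>\<^sup>+ t. ennreal (g (- t)) \<partial>lborel) = (\<integral>\<^sup>+ t. ennreal (g t) \<partial>lborel)"
    using nn_integral_real_affine[of "\<lambda>t. ennreal (g t)" "- 1" 0] by simp
  have dominated: "\<bar>t\<bar> powr (- p) * exp (- b * t\<^sup>2) \<le> g \<bar>t\<bar>" for t :: real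
    using abs_powr_mult_gaussian_le[of p b t] p b
    by (simp add: g_def add_increasing add_increasing2 split: if_splits)
  have "(\<integral>\<^sup>+ t. ennreal (\<bar>t\<bar> powr (- p) * exp (- b * t\<^sup>2)) \<partial>lborel)
      \<le> (\<integral>\<^sup>+ t. ennreal (g t) + ennreal (g (- t)) \<partial>lborel)"
  proof (intro nn_integral_mono)
    fix t :: real
    have "g \<bar>t\<bar> \<le> g t + g (- t)"
      using g_nonneg[of t] g_nonneg[of "- t"] by (cases "0 \<le> t") auto
    then show "ennreal (\<bar>t\<bar> powr (- p) * exp (- b * t\<^sup>2)) \<le> ennreal (g t) + ennreal (g (- t))"
      using dominated[of t] g_nonneg by (simp add: ennreal_plus[symmetric] del: ennreal_plus)
  qed
  also have "\<dots> = 2 * ennreal (1 / (1 - p) + 1 / b)"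
    by (simp add: nn_integral_add int_g_reflect int_g mult_2)
  also have "\<dots> < \<infinity>"
    by (simp add: ennreal_mult_less_top)
  finally show ?thesis .
qed

lemma gauss_div_norm_le_prod:
  fixes u :: "'a::euclidean_space"
  assumes nonzero: "\<forall>i\<in>Basis. u \<bullet> i \<noteq> 0"
  shows "gauss_div_norm b u \<le> (\<Prod>i\<in>Basis. \<bar>u \<bullet> i\<bar> powr (- 1 / DIM('a)) * exp (- b * (u \<bullet> i)\<^sup>2))"
proof -
  have "u \<noteq> 0"
    using nonzero SOME_Basis by force
  then have norm_pos: "0 < norm u"
    by simp
  have "(norm u)\<^sup>2 = (\<Sum>i\<in>Basis. (u \<bullet> i)\<^sup>2)"
    unfolding power2_norm_eq_inner by (subst euclidean_inner) (simp only: power2_eq_square)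
  then have prod_exp: "(\<Prod>i\<in>Basis. exp (- b * (u \<bullet> i)\<^sup>2)) = exp (- b * (norm u)\<^sup>2)"
    by (simp add: exp_sum sum_distrib_left)
  have "(\<Prod>i\<in>(Basis::'a set). norm u powr (- 1 / DIM('a))) = (norm u powr (- 1 / DIM('a))) ^ DIM('a)"
    by simp
  also have "\<dots> = norm u powr (real DIM('a) * (- 1 / DIM('a)))"
    using norm_pos by (simp only: powr_power)
  also have "\<dots> = 1 / norm u"
    by (simp add: powr_minus divide_inverse)
  finally have "1 / norm u = (\<Prod>i\<in>(Basis::'a set). norm u powr (- 1 / DIM('a)))" ..
  also have "\<dots> \<le> (\<Prod>i\<in>Basis. \<bar>u \<bullet> i\<bar> powr (- 1 / DIM('a)))"
    using nonzero by (intro prod_mono conjI powr_mono2' Basis_le_norm) auto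
  finally have "1 / norm u * exp (- b * (norm u)\<^sup>2)
      \<le> (\<Prod>i\<in>Basis. \<bar>u \<bullet> i\<bar> powr (- 1 / DIM('a))) * exp (- b * (norm u)\<^sup>2)"
    by (rule mult_right_mono) simp
  then show ?thesis
    unfolding gauss_div_norm_def prod.distrib prod_exp by simp
qed

lemma AE_lborel_coordinates_nonzero:
  "AE u in (lborel :: 'a::euclidean_space measure). \<forall>i\<in>Basis. u \<bullet> i \<noteq> 0"
proof (subst AE_ball_countable)
  show "\<forall>i\<in>Basis. AE u in (lborel :: 'a measure). u \<bullet> i \<noteq> 0"
  proof
    fix i :: 'a
    assume "i \<in> Basis"
    then have "{u::'a. u \<bullet> i = 0} \<in> null_sets lebesgue"
      using negligible_hyperplane[of i 0] by (simp add: negligible_iff_null_sets inner_commute nonzero_Basis)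
    moreover have "{u::'a. u \<bullet> i = 0} \<in> sets lborel"
      by measurable
    ultimately have "{u::'a. u \<bullet> i = 0} \<in> null_sets lborel"
      by (simp add: null_sets_completion_iff)
    then show "AE u in lborel. u \<bullet> i \<noteq> 0"
      by (rule AE_I') auto
  qed
qed (auto intro: countable_finite)

lemma integrable_gauss_div_norm:
  assumes dim: "2 \<le> DIM('a::euclidean_space)" and b: "0 < b"
  shows "integrable lborel (gauss_div_norm b :: 'a \<Rightarrow> real)"
proof (rule integrableI_bounded)
  show "gauss_div_norm b \<in> borel_measurable lborel"
    unfolding gauss_div_norm_def by measurable
  define \<phi> where "\<phi> t = ennreal (\<bar>t\<bar> powr (- 1 / DIM('a)) * exp (- b * t\<^sup>2))" for t :: real
  have "AE u in lborel. ennreal (norm (gauss_div_norm b u)) \<le> (\<Prod>i\<in>Basis. \<phi> ((u::'a) \<bullet> i))"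
    using AE_lborel_coordinates_nonzero
  proof (rule eventually_mono)
    fix u :: 'a
    assume "\<forall>i\<in>Basis. u \<bullet> i \<noteq> 0"
    then have "gauss_div_norm b u \<le> (\<Prod>i\<in>Basis. \<bar>u \<bullet> i\<bar> powr (- 1 / DIM('a)) * exp (- b * (u \<bullet> i)\<^sup>2))"
      by (rule gauss_div_norm_le_prod)
    then show "ennreal (norm (gauss_div_norm b u)) \<le> (\<Prod>i\<in>Basis. \<phi> (u \<bullet> i))"
      by (simp add: \<phi>_def prod_ennreal gauss_div_norm_nonneg ennreal_leI)
  qed
  then have "(\<integral>\<^sup>+ u. ennreal (norm (gauss_div_norm b (u::'a))) \<partial>lborel)
      \<le> (\<integral>\<^sup>+ u. (\<Prod>i\<in>Basis. \<phi> ((u::'a) \<bullet> i)) \<partial>lborel)"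
    by (rule nn_integral_mono_AE)
  also have "\<dots> = (\<Prod>i\<in>(Basis::'a set). \<integral>\<^sup>+ t. \<phi> t \<partial>lborel)"
    by (rule nn_integral_lborel_prod) (auto simp: \<phi>_def)
  also have "\<dots> = (\<integral>\<^sup>+ t. \<phi> t \<partial>lborel) ^ DIM('a)"
    by simp
  also have "\<dots> < \<infinity>"
    using nn_integral_abs_powr_gaussian_finite[of "1 / DIM('a)" b] dim b
    by (simp add: \<phi>_def power_less_top_ennreal)
  finally show "(\<integral>\<^sup>+ u. ennreal (norm (gauss_div_norm b (u::'a))) \<partial>lborel) < \<infinity>" .
qed

lemma lborel_integral_translate:
  fixes f :: "'a::euclidean_space \<Rightarrow> real"
  assumes "integrable lborel f"
  shows "integrable lborel (\<lambda>w. f (c + w))" and "(LINT w|lborel. f (c + w)) = (LINT w|lborel. f w)"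
proof -
  have [measurable]: "f \<in> borel_measurable borel"
    using assms by simp
  show "integrable lborel (\<lambda>w. f (c + w))"
    using assms by (subst (asm) lborel_distr_plus[symmetric, of c]) (simp add: integrable_distr_eq)
  show "(LINT w|lborel. f (c + w)) = (LINT w|lborel. f w)"
    by (subst (2) lborel_distr_plus[symmetric, of c]) (simp add: integral_distr)
qed

lemma integrable_gauss_div_norm_diff:
  fixes v :: "'a::euclidean_space"
  assumes "2 \<le> DIM('a)" and "0 < b"
  shows "integrable lborel (\<lambda>w. gauss_div_norm b (v - w))"
    and "(LINT w|lborel. gauss_div_norm b (v - w)) = (LINT u|lborel. gauss_div_norm b (u :: 'a))"
proof -
  have shift: "gauss_div_norm b (w - v) = gauss_div_norm b (v - w)" for w
    by (simp add: gauss_div_norm_def norm_minus_commute)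
  show "integrable lborel (\<lambda>w. gauss_div_norm b (v - w))"
    using lborel_integral_translate(1)[OF integrable_gauss_div_norm[OF assms], of "- v"] by (simp add: shift)
  show "(LINT w|lborel. gauss_div_norm b (v - w)) = (LINT u|lborel. gauss_div_norm b (u :: 'a))"
    using lborel_integral_translate(2)[OF integrable_gauss_div_norm[OF assms], of "- v"] by (simp add: shift)
qed

section \<open>Null sets in product spaces\<close>

lemma AE_lborel_const: "(AE x in (lborel :: 'a::euclidean_space measure). P) \<longleftrightarrow> P"
  by (cases P) (simp_all add: eventually_False ae_filter_eq_bot_iff)

lemma AE_lebesgue_on_if_AE_lborel:
  fixes S :: "'a::euclidean_space set"
  assumes "S \<in> sets lebesgue" and "AE x in lborel. P x"
  shows "AE x in lebesgue_on S. P x"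
proof -
  have "AE x in lebesgue. P x"
    using assms(2) by (simp add: AE_completion_iff)
  then show ?thesis
    using assms(1) by (subst AE_restrict_space_iff) (auto elim: eventually_mono)
qed

lemma AE_lebesgue_on_Times_sections:
  fixes A :: "'a::euclidean_space set" and P :: "'a \<times> 'b::euclidean_space \<Rightarrow> bool"
  assumes "A \<times> (UNIV :: 'b set) \<in> sets lebesgue"
    and "AE p in lebesgue_on (A \<times> UNIV). P p"
  obtains N where "N \<in> null_sets lborel" "\<And>y. y \<in> A \<Longrightarrow> y \<notin> N \<Longrightarrow> AE w in lborel. P (y, w)"
proof -
  have "AE p in lebesgue. p \<in> A \<times> UNIV \<longrightarrow> P p"
    using assms by (subst (asm) AE_restrict_space_iff) auto
  then have "AE p in lborel \<Otimes>\<^sub>M lborel. p \<in> A \<times> UNIV \<longrightarrow> P p"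
    unfolding lborel_prod by (simp add: AE_completion_iff)
  then have "AE y in lborel. AE w in lborel. y \<in> A \<longrightarrow> P (y, w :: 'b)"
    by (auto dest: lborel_pair.AE_pair)
  then obtain N where "N \<in> sets lborel" "emeasure lborel N = 0"
      "{y \<in> space lborel. \<not> (AE w in lborel. y \<in> A \<longrightarrow> P (y, w :: 'b))} \<subseteq> N"
    by (rule AE_E)
  then show thesis
    by (intro that[of N]) auto
qed

lemma AE_lines_avoid_null_set:
  fixes B :: "'a::euclidean_space set"
  assumes B: "B \<in> null_sets lborel"
  shows "AE p in lborel. AE s in lborel. fst p - s *\<^sub>R snd p \<notin> B"
proof -
  have [measurable]: "B \<in> sets borel"
    using B by auto
  have "AE p in lborel. fst p - s *\<^sub>R snd p \<notin> B" for s :: real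
  proof -
    have "AE x in lborel. x - s *\<^sub>R v \<notin> B" for v
      using AE_not_in[OF null_sets_translation[OF B, of "s *\<^sub>R v"]] by simp
    then have "AE v in lborel. AE x in lborel. x - s *\<^sub>R v \<notin> B"
      by simp
    then have "AE x in lborel. AE v in lborel. x - s *\<^sub>R v \<notin> B"
      by (subst lborel_pair.AE_commute) measurable
    then have "AE p in lborel \<Otimes>\<^sub>M lborel. fst p - s *\<^sub>R snd p \<notin> B"
      by (subst (asm) lborel_pair.AE_pair_iff) measurable
    then show ?thesis
      unfolding lborel_prod .
  qed
  have [measurable]: "(\<lambda>z::('a \<times> 'a) \<times> real. fst (fst z) - snd z *\<^sub>R snd (fst z)) \<in> borel_measurable borel"
    by (intro borel_measurable_continuous_onI continuous_intros)
  have "{z \<in> space (lborel \<Otimes>\<^sub>M lborel). fst (fst z) - snd z *\<^sub>R snd (fst z) \<notin> B}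
      \<in> sets ((lborel :: ('a \<times> 'a) measure) \<Otimes>\<^sub>M (lborel :: real measure))"
    unfolding lborel_prod by measurable
  moreover have "AE s in lborel. AE p in lborel. fst p - s *\<^sub>R snd p \<notin> B"
    using \<open>\<And>s. AE p in lborel. fst p - s *\<^sub>R snd p \<notin> B\<close> by simp
  ultimately show ?thesis
    by (subst lborel_pair.AE_commute)
qed

section \<open>Bounds on the operator K\<close>

definition kernel_decay_rate :: "real \<Rightarrow> real \<Rightarrow> real" where
  "kernel_decay_rate \<rho> \<alpha> = (1 - \<rho>) / 4 - \<alpha>\<^sup>2 / (1 - \<rho>)"

lemma kernel_decay_rate_pos:
  assumes "\<rho> < 1" and "\<bar>\<alpha>\<bar> < (1 - \<rho>) / 2"
  shows "0 < kernel_decay_rate \<rho> \<alpha>"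
proof -
  have "\<bar>\<alpha>\<bar>\<^sup>2 < ((1 - \<rho>) / 2)\<^sup>2"
    using assms by (intro power_strict_mono) auto
  then show ?thesis
    using assms(1) by (simp add: kernel_decay_rate_def power2_eq_square field_simps)
qed

lemma E_fac_mult_gaussian_le:
  fixes v w :: "real^3"
  assumes "\<rho> < 1" and "v \<noteq> w"
  shows "E_fac \<rho> v w * exp (- \<alpha> * (norm w)\<^sup>2)
    \<le> exp (- \<alpha> * (norm v)\<^sup>2) * exp (- kernel_decay_rate \<rho> \<alpha> * (norm (v - w))\<^sup>2)"
proof -
  define a where "a = (1 - \<rho>) / 4"
  define d where "d = norm (v - w)"
  define t where "t = ((norm v)\<^sup>2 - (norm w)\<^sup>2) / d"
  have "0 < a" "0 < d"
    using assms by (simp_all add: a_def d_def)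
  have norm_v: "(norm v)\<^sup>2 = (norm w)\<^sup>2 + t * d"
    using \<open>0 < d\<close> by (simp add: t_def)
  have rate: "kernel_decay_rate \<rho> \<alpha> = a - \<alpha>\<^sup>2 / (4 * a)"
    using assms(1) by (simp add: kernel_decay_rate_def a_def field_simps)
  \<comment> \<open>completing the square in \<open>t\<close>\<close>
  have "0 \<le> a * (t - \<alpha> * d / (2 * a))\<^sup>2"
    using \<open>0 < a\<close> by simp
  also have "\<dots> = a * t\<^sup>2 - \<alpha> * (t * d) + \<alpha>\<^sup>2 / (4 * a) * d\<^sup>2"
    using \<open>0 < a\<close> by (simp add: power2_eq_square field_simps)
  finally have "- a * (d\<^sup>2 + t\<^sup>2) - \<alpha> * (norm w)\<^sup>2 \<le> - \<alpha> * (norm v)\<^sup>2 - (a - \<alpha>\<^sup>2 / (4 * a)) * d\<^sup>2"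
    unfolding norm_v by (simp add: algebra_simps)
  have "E_fac \<rho> v w * exp (- \<alpha> * (norm w)\<^sup>2) = exp (- a * (d\<^sup>2 + t\<^sup>2) - \<alpha> * (norm w)\<^sup>2)"
    by (simp add: E_fac_def a_def d_def t_def exp_add[symmetric] exp_diff)
  also have "\<dots> \<le> exp (- \<alpha> * (norm v)\<^sup>2 - (a - \<alpha>\<^sup>2 / (4 * a)) * d\<^sup>2)"
    using \<open>- a * (d\<^sup>2 + t\<^sup>2) - \<alpha> * (norm w)\<^sup>2 \<le> _\<close> by simp
  also have "\<dots> = exp (- \<alpha> * (norm v)\<^sup>2) * exp (- kernel_decay_rate \<rho> \<alpha> * (norm (v - w))\<^sup>2)"
    unfolding rate d_def by (simp add: exp_add[symmetric] algebra_simps)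
  finally show ?thesis .
qed

lemma propA_params: "propA \<nu> k \<gamma> \<rho> C \<Longrightarrow> 0 \<le> \<gamma> \<and> \<gamma> \<le> 1 \<and> 0 \<le> \<rho> \<and> \<rho> < 1 \<and> 0 < C"
  unfolding propA_def by blast

lemma propA_nu_lower:
  assumes "propA \<nu> k \<gamma> \<rho> C"
  shows "1 \<le> C * \<nu> v"
proof -
  have "1 \<le> (1 + norm v) powr \<gamma>"
    using propA_params[OF assms] by (intro ge_one_powr_ge_zero) auto
  also have "\<dots> \<le> C * \<nu> v"
    using assms unfolding propA_def by blast
  finally show ?thesis .
qed

lemma propA_abs_k_le:
  assumes A: "propA \<nu> k \<gamma> \<rho> C" and "v \<noteq> w"
  shows "\<bar>k v w\<bar> \<le> C * E_fac \<rho> v w / norm (v - w)"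
proof -
  define d where "d = norm (v - w)"
  define P where "P = (1 + norm v + norm w) powr (1 - \<gamma>)"
  have "0 < d"
    using \<open>v \<noteq> w\<close> by (simp add: d_def)
  have "1 \<le> P"
    unfolding P_def using propA_params[OF A] by (intro ge_one_powr_ge_zero) auto
  have "\<bar>k v w\<bar> \<le> C * E_fac \<rho> v w / (d * P)"
    using assms unfolding propA_def d_def P_def by blast
  also have "\<dots> \<le> C * E_fac \<rho> v w / d"
    using propA_params[OF A] \<open>0 < d\<close> \<open>1 \<le> P\<close>
    by (intro divide_left_mono) (auto simp: E_fac_def)
  finally show ?thesis
    unfolding d_def .
qed

lemma abs_k_mult_gaussian_le:
  assumes A: "propA \<nu> k \<gamma> \<rho> C" and "v \<noteq> w"
  shows "\<bar>k v w\<bar> * exp (- \<alpha> * (norm w)\<^sup>2)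
    \<le> C * exp (- \<alpha> * (norm v)\<^sup>2) * gauss_div_norm (kernel_decay_rate \<rho> \<alpha>) (v - w)"
proof -
  have "0 < C" "\<rho> < 1"
    using propA_params[OF A] by auto
  have "\<bar>k v w\<bar> * exp (- \<alpha> * (norm w)\<^sup>2)
      \<le> C / norm (v - w) * (E_fac \<rho> v w * exp (- \<alpha> * (norm w)\<^sup>2))"
    using mult_right_mono[OF propA_abs_k_le[OF assms], of "exp (- \<alpha> * (norm w)\<^sup>2)"] by simp
  also have "\<dots> \<le> C / norm (v - w)
      * (exp (- \<alpha> * (norm v)\<^sup>2) * exp (- kernel_decay_rate \<rho> \<alpha> * (norm (v - w))\<^sup>2))"
    using \<open>0 < C\<close> by (intro mult_left_mono E_fac_mult_gaussian_le \<open>\<rho> < 1\<close> \<open>v \<noteq> w\<close>) auto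
  also have "\<dots> = C * exp (- \<alpha> * (norm v)\<^sup>2) * gauss_div_norm (kernel_decay_rate \<rho> \<alpha>) (v - w)"
    by (simp add: gauss_div_norm_def)
  finally show ?thesis .
qed

lemma abs_Kop_le:
  assumes A: "propA \<nu> k \<gamma> \<rho> C" and \<alpha>: "\<bar>\<alpha>\<bar> < (1 - \<rho>) / 2"
    and h: "AE w in lborel. exp (\<alpha> * (norm w)\<^sup>2) * \<bar>h y w\<bar> \<le> M"
  shows "\<bar>Kop k h y v\<bar>
    \<le> C * M * (LINT u|lborel. gauss_div_norm (kernel_decay_rate \<rho> \<alpha>) (u :: real^3))
      * exp (- \<alpha> * (norm v)\<^sup>2)"
proof -
  define b where "b = kernel_decay_rate \<rho> \<alpha>"
  define G where "G w = C * M * exp (- \<alpha> * (norm v)\<^sup>2) * gauss_div_norm b (v - w)" for w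
  have "0 < C" "\<rho> < 1"
    using propA_params[OF A] by auto
  have "AE w in (lborel :: (real^3) measure). 0 \<le> M"
    using h by (rule eventually_mono) (metis abs_ge_zero exp_ge_zero mult_nonneg_nonneg order_trans)
  then have "0 \<le> M"
    by (simp add: AE_lborel_const)
  have "0 < b"
    using kernel_decay_rate_pos[OF \<open>\<rho> < 1\<close> \<alpha>] by (simp add: b_def)
  have "integrable lborel G"
    unfolding G_def using integrable_gauss_div_norm_diff(1)[OF _ \<open>0 < b\<close>, of v]
    by (intro integrable_mult_right) simp
  have integral_G: "(LINT w|lborel. G w)
      = C * M * (LINT u|lborel. gauss_div_norm b (u :: real^3)) * exp (- \<alpha> * (norm v)\<^sup>2)"
    using integrable_gauss_div_norm_diff(2)[OF _ \<open>0 < b\<close>, of v] by (simp add: G_def)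
  have "AE w in lborel. w \<noteq> v"
    by (rule AE_lborel_singleton)
  with h have "AE w in lborel. \<bar>k v w * h y w\<bar> \<le> G w"
  proof eventually_elim
    case (elim w)
    have "\<bar>h y w\<bar> \<le> M / exp (\<alpha> * (norm w)\<^sup>2)"
      using elim(1) by (simp add: pos_le_divide_eq mult.commute)
    then have "\<bar>h y w\<bar> \<le> M * exp (- \<alpha> * (norm w)\<^sup>2)"
      by (simp add: exp_minus divide_inverse)
    then have "\<bar>k v w * h y w\<bar> \<le> \<bar>k v w\<bar> * (M * exp (- \<alpha> * (norm w)\<^sup>2))"
      unfolding abs_mult by (rule mult_left_mono) simp
    also have "\<dots> = M * (\<bar>k v w\<bar> * exp (- \<alpha> * (norm w)\<^sup>2))"
      by simp
    also have "\<dots> \<le> M * (C * exp (- \<alpha> * (norm v)\<^sup>2) * gauss_div_norm b (v - w))"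
      using abs_k_mult_gaussian_le[OF A elim(2)[symmetric]] \<open>0 \<le> M\<close>
      unfolding b_def by (rule mult_left_mono)
    finally show ?case
      by (simp add: G_def mult_ac)
  qed
  then have "(LINT w|lborel. \<bar>k v w * h y w\<bar>) \<le> (LINT w|lborel. G w)"
    using \<open>0 < C\<close> \<open>0 \<le> M\<close>
    by (intro integral_mono_AE'[OF \<open>integrable lborel G\<close>]) (auto simp: G_def gauss_div_norm_nonneg)
  moreover have "\<bar>Kop k h y v\<bar> \<le> (LINT w|lborel. \<bar>k v w * h y w\<bar>)"
    unfolding Kop_def using integral_norm_bound[of lborel "\<lambda>w. k v w * h y w"] by simp
  ultimately show ?thesis
    unfolding integral_G b_def by linarith
qed

lemma abs_Kop_le_off_null_set:
  assumes A: "propA \<nu> k \<gamma> \<rho> C" and \<alpha>: "\<bar>\<alpha>\<bar> < (1 - \<rho>) / 2"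
    and \<Omega>: "\<Omega> \<times> (UNIV :: (real^3) set) \<in> sets lebesgue"
    and h: "AE p in lebesgue_on (\<Omega> \<times> UNIV). exp (\<alpha> * (norm (snd p))\<^sup>2) * \<bar>h (fst p) (snd p)\<bar> \<le> M"
  obtains B where "B \<in> null_sets lborel"
    and "\<And>y v. y \<in> \<Omega> \<Longrightarrow> y \<notin> B \<Longrightarrow> \<bar>Kop k h y v\<bar>
      \<le> C * M * (LINT u|lborel. gauss_div_norm (kernel_decay_rate \<rho> \<alpha>) (u :: real^3))
        * exp (- \<alpha> * (norm v)\<^sup>2)"
proof -
  obtain B where "B \<in> null_sets lborel"
    and "\<And>y. y \<in> \<Omega> \<Longrightarrow> y \<notin> B \<Longrightarrow> AE w in lborel. exp (\<alpha> * (norm w)\<^sup>2) * \<bar>h y w\<bar> \<le> M"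
    using AE_lebesgue_on_Times_sections[OF \<Omega> h] by auto
  then show thesis
    using abs_Kop_le[OF A \<alpha>] that by blast
qed

section \<open>Integration along backward characteristics\<close>

lemma mem_if_less_tau:
  assumes "0 \<le> s" and "ereal s < tau \<Omega> x v"
  shows "x - s *\<^sub>R v \<in> \<Omega>"
proof (rule ccontr)
  assume "x - s *\<^sub>R v \<notin> \<Omega>"
  then have "tau \<Omega> x v \<le> ereal s"
    unfolding tau_def using assms(1) by (intro Inf_lower) blast
  with assms(2) show False
    by simp
qed

lemma less_tau_le_diameter:
  assumes "bounded \<Omega>" "x \<in> \<Omega>" "v \<noteq> 0" and "0 \<le> s" "ereal s < tau \<Omega> x v"
  shows "s \<le> diameter \<Omega> / norm v"
proof -
  have "dist x (x - s *\<^sub>R v) \<le> diameter \<Omega>"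
    using assms by (intro diameter_bounded_bound mem_if_less_tau)
  then show ?thesis
    using assms by (simp add: dist_norm field_simps)
qed

lemma abs_S_Omega_le_integral:
  assumes "integrable lborel F" and "\<And>s. 0 \<le> F s"
    and "AE s in lborel. 0 \<le> s \<longrightarrow> ereal s < tau \<Omega> x v \<longrightarrow> exp (- \<nu> v * s) * \<bar>g (x - s *\<^sub>R v) v\<bar> \<le> F s"
  shows "\<bar>S_Omega \<Omega> \<nu> g x v\<bar> \<le> (LINT s|lborel. F s)"
proof -
  define I where "I = {s. 0 \<le> s \<and> ereal s < tau \<Omega> x v}"
  define f where "f s = indicator I s *\<^sub>R (exp (- \<nu> v * s) * g (x - s *\<^sub>R v) v)" for s
  have "AE s in lborel. norm (f s) \<le> F s"
    using assms(3)
  proof (rule eventually_mono)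
    fix s
    assume "0 \<le> s \<longrightarrow> ereal s < tau \<Omega> x v \<longrightarrow> exp (- \<nu> v * s) * \<bar>g (x - s *\<^sub>R v) v\<bar> \<le> F s"
    then show "norm (f s) \<le> F s"
      using assms(2)[of s] by (cases "s \<in> I") (simp_all add: f_def I_def abs_mult)
  qed
  have "\<bar>S_Omega \<Omega> \<nu> g x v\<bar> = \<bar>LINT s|lborel. f s\<bar>"
    by (simp add: S_Omega_def set_lebesgue_integral_def I_def f_def)
  also have "\<dots> \<le> (LINT s|lborel. norm (f s))"
    using integral_norm_bound[of lborel f] by simp
  also have "\<dots> \<le> (LINT s|lborel. F s)"
    using assms(1,2) \<open>AE s in lborel. norm (f s) \<le> F s\<close> by (intro integral_mono_AE') auto
  finally show ?thesis .
qed

lemma has_bochner_integral_exp_neg_halfline: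
  fixes n :: real
  assumes "0 < n"
  shows "has_bochner_integral lborel (\<lambda>s. indicator {0..} s * exp (- n * s)) (1 / n)"
proof -
  have "((\<lambda>s. if s \<in> {0..} then exp (- n * s) else 0) has_integral 1 / n) UNIV"
    unfolding has_integral_restrict_UNIV using has_integral_exp_minus_to_infinity[OF assms, of 0] by simp
  moreover have "(\<lambda>s. if s \<in> {0..} then exp (- n * s) else 0) = (\<lambda>s. indicator {0..} s * exp (- n * s))"
    by (auto simp: indicator_def)
  ultimately have "(\<integral>\<^sup>+ s. ennreal (indicator {0..} s * exp (- n * s)) \<partial>lborel) = ennreal (1 / n)"
    by (intro nn_integral_has_integral_lborel) auto
  then show ?thesis
    using assms by (intro has_bochner_integral_nn_integral) auto
qed

lemma abs_S_Omega_le_div_nu: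
  assumes "0 < \<nu> v" and "0 \<le> K"
    and "AE s in lborel. 0 \<le> s \<longrightarrow> ereal s < tau \<Omega> x v \<longrightarrow> \<bar>g (x - s *\<^sub>R v) v\<bar> \<le> K"
  shows "\<bar>S_Omega \<Omega> \<nu> g x v\<bar> \<le> K / \<nu> v"
proof -
  have "\<bar>S_Omega \<Omega> \<nu> g x v\<bar> \<le> (LINT s|lborel. K * (indicator {0..} s * exp (- \<nu> v * s)))"
    using has_bochner_integral_exp_neg_halfline[OF assms(1)] assms(2,3)
    by (intro abs_S_Omega_le_integral)
      (auto elim!: eventually_mono simp: has_bochner_integral_iff indicator_def mult.commute mult_left_mono)
  also have "\<dots> = K / \<nu> v"
    using has_bochner_integral_exp_neg_halfline[OF assms(1)] by (simp add: has_bochner_integral_iff)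
  finally show ?thesis .
qed

lemma abs_S_Omega_le_diameter:
  assumes "bounded \<Omega>" "x \<in> \<Omega>" "v \<noteq> 0" and "0 \<le> \<nu> v" "0 \<le> K"
    and "AE s in lborel. 0 \<le> s \<longrightarrow> ereal s < tau \<Omega> x v \<longrightarrow> \<bar>g (x - s *\<^sub>R v) v\<bar> \<le> K"
  shows "\<bar>S_Omega \<Omega> \<nu> g x v\<bar> \<le> K * (diameter \<Omega> / norm v)"
proof -
  define T where "T = diameter \<Omega> / norm v"
  have "0 \<le> T"
    by (simp add: T_def diameter_ge_0[OF assms(1)])
  have "exp (- \<nu> v * s) * \<bar>g (x - s *\<^sub>R v) v\<bar> \<le> K * indicator {0..T} s"
    if "0 \<le> s" "ereal s < tau \<Omega> x v" "\<bar>g (x - s *\<^sub>R v) v\<bar> \<le> K" for s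
  proof -
    have "s \<le> T"
      unfolding T_def using assms(1-3) that(1,2) by (rule less_tau_le_diameter)
    moreover have "exp (- \<nu> v * s) \<le> 1"
      using assms(4) that(1) by simp
    moreover have "exp (- \<nu> v * s) * \<bar>g (x - s *\<^sub>R v) v\<bar> \<le> 1 * K"
      using \<open>exp (- \<nu> v * s) \<le> 1\<close> that(3) by (intro mult_mono) auto
    ultimately show ?thesis
      using that(1) by simp
  qed
  moreover have "integrable lborel (\<lambda>s. K * indicator {0..T} s)"
    using \<open>0 \<le> T\<close> by (intro integrable_mult_right integrable_real_indicator) auto
  ultimately have "\<bar>S_Omega \<Omega> \<nu> g x v\<bar> \<le> (LINT s|lborel. K * indicator {0..T} s)"
    using assms(5,6) by (intro abs_S_Omega_le_integral) (auto elim!: eventually_mono)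
  also have "\<dots> = K * T"
    using \<open>0 \<le> T\<close> by simp
  finally show ?thesis
    by (simp add: T_def)
qed

lemma abs_S_Omega_le_off_null_set:
  assumes "0 < C" "1 \<le> C * \<nu> v" and "bounded \<Omega>" "x \<in> \<Omega>" and "0 \<le> K"
    and "\<And>y. y \<in> \<Omega> \<Longrightarrow> y \<notin> B \<Longrightarrow> \<bar>g y v\<bar> \<le> K"
    and "AE s in lborel. x - s *\<^sub>R v \<notin> B"
  shows "\<bar>S_Omega \<Omega> \<nu> g x v\<bar> \<le> max C 1 * K * (if v = 0 then 1 else min 1 (diameter \<Omega> / norm v))"
proof -
  have "0 < C * \<nu> v"
    using assms(2) by linarith
  then have "0 < \<nu> v"
    using assms(1) zero_less_mult_pos by blast
  have g: "AE s in lborel. 0 \<le> s \<longrightarrow> ereal s < tau \<Omega> x v \<longrightarrow> \<bar>g (x - s *\<^sub>R v) v\<bar> \<le> K"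
    using assms(7) by (auto elim!: eventually_mono intro: assms(6) mem_if_less_tau)
  have "K * (1 / \<nu> v) \<le> K * C"
    using assms(2,5) \<open>0 < \<nu> v\<close> by (intro mult_left_mono) (simp_all add: field_simps)
  then have bound_C: "\<bar>S_Omega \<Omega> \<nu> g x v\<bar> \<le> K * C"
    using abs_S_Omega_le_div_nu[where \<Omega> = \<Omega> and x = x and g = g and \<nu> = \<nu> and v = v,
        OF \<open>0 < \<nu> v\<close> assms(5) g]
    by simp
  show ?thesis
  proof (cases "v = 0")
    case True
    have "K * C \<le> K * max C 1"
      using assms(5) by (intro mult_left_mono) auto
    moreover have "max C 1 * K * (if v = 0 then 1 else min 1 (diameter \<Omega> / norm v)) = K * max C 1"
      using True by simp
    ultimately show ?thesis
      using bound_C by linarith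
  next
    case False
    define d where "d = diameter \<Omega> / norm v"
    have "0 \<le> d"
      by (simp add: d_def diameter_ge_0[OF assms(3)])
    have "\<bar>S_Omega \<Omega> \<nu> g x v\<bar> \<le> K * d"
      unfolding d_def using \<open>0 < \<nu> v\<close> assms(5) g
      by (intro abs_S_Omega_le_diameter assms(3,4) False) auto
    with bound_C have "\<bar>S_Omega \<Omega> \<nu> g x v\<bar> \<le> K * min C d"
      by (simp add: min_def)
    also have "\<dots> \<le> K * (max C 1 * min 1 d)"
      using assms(1,5) \<open>0 \<le> d\<close>
      by (intro mult_left_mono) (auto simp: min_def max_def mult_le_cancel_left1 mult_le_cancel_right1)
    finally show ?thesis
      using False by (simp add: d_def mult_ac)
  qed
qed

lemma Linf_alpha_AE_le:
  assumes "h \<in> Linf_alpha \<Omega> \<alpha>"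
  shows "AE p in lebesgue_on (\<Omega> \<times> UNIV).
    exp (\<alpha> * (norm (snd p))\<^sup>2) * \<bar>h (fst p) (snd p)\<bar> \<le> real_of_ereal (Linf_norm \<Omega> \<alpha> h)"
proof -
  have "Linf_norm \<Omega> \<alpha> h < \<infinity>"
    using assms by (simp add: Linf_alpha_def)
  have "AE p in lebesgue_on (\<Omega> \<times> UNIV).
      ereal (exp (\<alpha> * (norm (snd p))\<^sup>2) * \<bar>h (fst p) (snd p)\<bar>) \<le> Linf_norm \<Omega> \<alpha> h"
    using esssup_AE[of "\<lambda>(x, v). ereal (exp (\<alpha> * (norm v)\<^sup>2) * \<bar>h x v\<bar>)"]
    by (simp add: Linf_norm_def case_prod_beta)
  then show ?thesis
  proof (rule eventually_mono)
    fix p :: "(real^3) \<times> (real^3)"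
    assume "ereal (exp (\<alpha> * (norm (snd p))\<^sup>2) * \<bar>h (fst p) (snd p)\<bar>) \<le> Linf_norm \<Omega> \<alpha> h"
    then show "exp (\<alpha> * (norm (snd p))\<^sup>2) * \<bar>h (fst p) (snd p)\<bar> \<le> real_of_ereal (Linf_norm \<Omega> \<alpha> h)"
      using \<open>Linf_norm \<Omega> \<alpha> h < \<infinity>\<close> by (cases "Linf_norm \<Omega> \<alpha> h") auto
  qed
qed

lemma bdd_domain_Times_sets_lebesgue:
  assumes "bdd_domain \<Omega>"
  shows "\<Omega> \<times> (UNIV :: (real^3) set) \<in> sets lebesgue"
proof -
  have "open (\<Omega> \<times> (UNIV :: (real^3) set))"
    using assms by (simp add: bdd_domain_def open_Times)
  then show ?thesis
    by simp
qed

lemma abs_S_Omega_Kop_AE_le: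
  assumes A: "propA \<nu> k \<gamma> \<rho> C" and \<alpha>: "\<bar>\<alpha>\<bar> < (1 - \<rho>) / 2"
    and "bounded \<Omega>" and \<Omega>: "\<Omega> \<times> (UNIV :: (real^3) set) \<in> sets lebesgue"
    and h: "AE p in lebesgue_on (\<Omega> \<times> UNIV). exp (\<alpha> * (norm (snd p))\<^sup>2) * \<bar>h (fst p) (snd p)\<bar> \<le> M"
  shows "AE p in lebesgue_on (\<Omega> \<times> UNIV). \<bar>S_Omega \<Omega> \<nu> (Kop k h) (fst p) (snd p)\<bar>
    \<le> max C 1 * C * (LINT u|lborel. gauss_div_norm (kernel_decay_rate \<rho> \<alpha>) (u :: real^3))
      * M * exp (- \<alpha> * (norm (snd p))\<^sup>2) * (if snd p = 0 then 1 else min 1 (diameter \<Omega> / norm (snd p)))"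
proof -
  define J where "J = (LINT u|lborel. gauss_div_norm (kernel_decay_rate \<rho> \<alpha>) (u :: real^3))"
  have "0 < C"
    using propA_params[OF A] by simp
  have "0 \<le> J"
    unfolding J_def by (simp add: integral_nonneg_AE gauss_div_norm_nonneg)
  obtain B where "B \<in> null_sets lborel"
    and Kh: "\<And>y v. y \<in> \<Omega> \<Longrightarrow> y \<notin> B \<Longrightarrow> \<bar>Kop k h y v\<bar> \<le> C * M * J * exp (- \<alpha> * (norm v)\<^sup>2)"
    using abs_Kop_le_off_null_set[OF A \<alpha> \<Omega> h] unfolding J_def by blast
  have "AE p in lebesgue_on (\<Omega> \<times> UNIV). AE s in lborel. fst p - s *\<^sub>R snd p \<notin> B"
    using \<Omega> AE_lines_avoid_null_set[OF \<open>B \<in> null_sets lborel\<close>] by (rule AE_lebesgue_on_if_AE_lborel)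
  moreover have "AE p in lebesgue_on (\<Omega> \<times> UNIV). fst p \<in> \<Omega>"
    by (rule AE_I2) (auto simp: space_restrict_space)
  ultimately show ?thesis
    using h unfolding J_def[symmetric]
  proof eventually_elim
    case (elim p)
    have "0 \<le> M"
      using elim(3) by (metis abs_ge_zero exp_ge_zero mult_nonneg_nonneg order_trans)
    then have "0 \<le> C * M * J * exp (- \<alpha> * (norm (snd p))\<^sup>2)"
      using \<open>0 < C\<close> \<open>0 \<le> J\<close> by simp
    from abs_S_Omega_le_off_null_set[where g = "Kop k h" and v = "snd p" and B = B,
        OF \<open>0 < C\<close> propA_nu_lower[OF A] \<open>bounded \<Omega>\<close> elim(2) this Kh elim(1)]
    show ?case
      by (simp add: mult_ac)
  qed
qed

theorem lemma3p1:
  fixes \<nu> :: "real^3 \<Rightarrow> real" and k :: "real^3 \<Rightarrow> real^3 \<Rightarrow> real"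
    and \<gamma> \<rho> CA \<alpha> :: real
  assumes "propA \<nu> k \<gamma> \<rho> CA"
    and "0 \<le> \<alpha>" and "\<alpha> < (1 - \<rho>) / 2"
  shows "\<exists>C \<ge> 0. \<forall>\<Omega> h. bdd_domain \<Omega> \<longrightarrow> h \<in> Linf_alpha \<Omega> \<alpha> \<longrightarrow>
           (AE p in lebesgue_on (\<Omega> \<times> UNIV).
              \<bar>S_Omega \<Omega> \<nu> (Kop k h) (fst p) (snd p)\<bar>
                \<le> C * real_of_ereal (Linf_norm \<Omega> \<alpha> h) * exp (- \<alpha> * (norm (snd p))\<^sup>2)
                  * (if snd p = 0 then 1 else min 1 (diameter \<Omega> / norm (snd p))))"
proof -
  define J where "J = (LINT u|lborel. gauss_div_norm (kernel_decay_rate \<rho> \<alpha>) (u :: real^3))"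
  have \<alpha>: "\<bar>\<alpha>\<bar> < (1 - \<rho>) / 2"
    using assms(2,3) by simp
  have "0 \<le> max CA 1 * CA * J"
    using propA_params[OF assms(1)] by (simp add: J_def integral_nonneg_AE gauss_div_norm_nonneg)
  moreover have "AE p in lebesgue_on (\<Omega> \<times> UNIV). \<bar>S_Omega \<Omega> \<nu> (Kop k h) (fst p) (snd p)\<bar>
      \<le> max CA 1 * CA * J * real_of_ereal (Linf_norm \<Omega> \<alpha> h) * exp (- \<alpha> * (norm (snd p))\<^sup>2)
        * (if snd p = 0 then 1 else min 1 (diameter \<Omega> / norm (snd p)))"
    if "bdd_domain \<Omega>" and "h \<in> Linf_alpha \<Omega> \<alpha>" for \<Omega> h
    using abs_S_Omega_Kop_AE_le[OF assms(1) \<alpha> _ bdd_domain_Times_sets_lebesgue[OF that(1)]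
        Linf_alpha_AE_le[OF that(2)]] that(1)
    unfolding J_def by (simp add: bdd_domain_def)
  ultimately show ?thesis
    by blast
qed

end
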